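(* Let $G$ be a graph of order $n$ and let $uv$ be an edge of $\Lambda(G)$. Then there exist at least $n-3$ odd pairs of $G$ whose first component is $\{u,v\}$.
   Context: All graphs are simple and finite. For a graph $G$ and disjoint $X, Y \subseteq V(G)$, $E(X,Y)$ denotes the set of edges with one endpoint in $X$ and the other in $Y$. An ordered pair $(X,Y)$ of disjoint subsets of $V(G)$ with $|X|=|Y|=2$ is an odd pair of $G$ if $|E(X,Y)|$ is odd. A $2$-subset $\{u,v\}\subseteq V(G)$ is an odd set if it is the first component of some odd pair of $G$. The graph $\Lambda(G)$ has vertex set $V(G)$, and $uv$ is an edge of $\Lambda(G)$ iff $\{u,v\}$ is an odd set of $G$. *)

theory Defs
  imports Main
begin

definition simple_graph :: "'a set \<Rightarrow> 'a set set \<Rightarrow> bool" where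
  "simple_graph V E \<longleftrightarrow> finite V \<and> (\<forall>e\<in>E. e \<subseteq> V \<and> card e = 2)"

definition edges_between :: "'a set set \<Rightarrow> 'a set \<Rightarrow> 'a set \<Rightarrow> 'a set set" where
  "edges_between E X Y = {e \<in> E. \<exists>x\<in>X. \<exists>y\<in>Y. e = {x, y}}"

definition odd_pair :: "'a set \<Rightarrow> 'a set set \<Rightarrow> 'a set \<Rightarrow> 'a set \<Rightarrow> bool" where
  "odd_pair V E X Y \<longleftrightarrow> X \<subseteq> V \<and> Y \<subseteq> V \<and> X \<inter> Y = {} \<and> card X = 2 \<and> card Y = 2
     \<and> odd (card (edges_between E X Y))"

definition odd_set :: "'a set \<Rightarrow> 'a set set \<Rightarrow> 'a set \<Rightarrow> bool" where
  "odd_set V E S \<longleftrightarrow> (\<exists>Y. odd_pair V E S Y)"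

definition Lambda_edges :: "'a set \<Rightarrow> 'a set set \<Rightarrow> 'a set set" where
  "Lambda_edges V E = {{u, v} | u v. u \<in> V \<and> v \<in> V \<and> u \<noteq> v \<and> odd_set V E {u, v}}"

end

theory Submission
  imports Defs
begin

text \<open>Fix the odd set \<open>{u,v}\<close> and write \<open>d(z)\<close> for the number of edges from \<open>z\<close> to \<open>{u,v}\<close>.
  For a 2-set \<open>{a,b}\<close> disjoint from \<open>{u,v}\<close>, \<open>|E({u,v},{a,b})| = d(a) + d(b)\<close>, so
  \<open>({u,v},{a,b})\<close> is odd iff \<open>d(a)\<close> and \<open>d(b)\<close> have different parities. Given one odd pair
  \<open>({u,v},{x,y})\<close>, \<open>d(x)\<close> and \<open>d(y)\<close> differ in parity, so for every other vertex \<open>w\<close> one of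
  \<open>{x,w}\<close>, \<open>{y,w}\<close> yields an odd pair. These \<open>n - 4\<close> pairs are distinct (each determines
  \<open>w\<close>), and together with \<open>{x,y}\<close> they give \<open>n - 3\<close> odd pairs.\<close>

definition link_degree :: "'a set set \<Rightarrow> 'a \<Rightarrow> 'a \<Rightarrow> 'a \<Rightarrow> nat" where
  "link_degree E u v z = of_bool ({u,z} \<in> E) + of_bool ({v,z} \<in> E)"

lemma card_edges_between_doubletons:
  assumes "u \<noteq> v" "a \<noteq> b" "a \<notin> {u,v}" "b \<notin> {u,v}"
  shows "card (edges_between E {u,v} {a,b}) = link_degree E u v a + link_degree E u v b"
proof -
  define A where "A = {{u,a},{u,b},{v,a},{v,b}}"
  have distinct: "{u,a} \<noteq> {u,b}" "{u,a} \<noteq> {v,a}" "{u,a} \<noteq> {v,b}" "{u,b} \<noteq> {v,a}"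
     "{u,b} \<noteq> {v,b}" "{v,a} \<noteq> {v,b}"
    using assms by (auto simp: doubleton_eq_iff)
  have "edges_between E {u,v} {a,b} = A \<inter> {e. e \<in> E}"
    unfolding edges_between_def A_def by blast
  then have "card (edges_between E {u,v} {a,b}) = (\<Sum>e\<in>A. of_bool (e \<in> E))"
    by (simp add: sum_of_bool_eq A_def)
  also have "\<dots> = link_degree E u v a + link_degree E u v b"
    unfolding link_degree_def A_def using distinct by (simp add: insert_commute)
  finally show ?thesis .
qed

lemma odd_pair_doubletons_iff:
  assumes "{u,v,a,b} \<subseteq> V" "u \<noteq> v" "a \<noteq> b" "a \<notin> {u,v}" "b \<notin> {u,v}"
  shows "odd_pair V E {u,v} {a,b} \<longleftrightarrow> odd (link_degree E u v a + link_degree E u v b)"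
  using assms card_edges_between_doubletons[OF assms(2-5)] by (auto simp: odd_pair_def)

lemma odd_pair_doubletonsD:
  assumes "odd_pair V E {u,v} {x,y}"
  shows "{u,v,x,y} \<subseteq> V" "u \<noteq> v" "x \<noteq> y" "x \<notin> {u,v}" "y \<notin> {u,v}"
  using assms by (auto simp: odd_pair_def card_2_iff doubleton_eq_iff)

lemma odd_pair_exchange:
  assumes "odd_pair V E {u,v} {x,y}" "w \<in> V - {u,v,x,y}"
  shows "odd_pair V E {u,v} {x,w} \<or> odd_pair V E {u,v} {y,w}"
proof -
  note uvxy = odd_pair_doubletonsD[OF assms(1)]
  have "odd (link_degree E u v x + link_degree E u v y)"
    using assms(1) odd_pair_doubletons_iff[OF uvxy] by simp
  then have "odd (link_degree E u v x + link_degree E u v w)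
      \<or> odd (link_degree E u v y + link_degree E u v w)"
    by auto
  with uvxy assms(2) show ?thesis
    using odd_pair_doubletons_iff[of u v x w V] odd_pair_doubletons_iff[of u v y w V] by auto
qed

lemma card_odd_partners_ge:
  assumes "finite V" "odd_pair V E {u,v} {x,y}"
  shows "card {Y. odd_pair V E {u,v} Y} \<ge> card V - 3"
proof -
  note uvxy = odd_pair_doubletonsD[OF assms(2)]
  define P where "P = {Y. odd_pair V E {u,v} Y}"
  define W where "W = V - {u,v,x,y}"
  define partner where "partner w = (if odd_pair V E {u,v} {x,w} then {x,w} else {y,w})" for w
  have partner_in_P: "partner w \<in> P" if "w \<in> W" for w
    using odd_pair_exchange[OF assms(2)] that unfolding partner_def P_def W_def by auto
  have partner_recovers: "partner w - {x,y} = {w}" if "w \<in> W" for w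
    using that unfolding partner_def W_def by auto
  have "inj_on partner W"
    by (rule inj_on_inverseI[where g = "\<lambda>Y. the_elem (Y - {x,y})"]) (simp add: partner_recovers)
  moreover have "{x,y} \<notin> partner ` W"
    using partner_recovers by fastforce
  moreover have "insert {x,y} (partner ` W) \<subseteq> P"
    using partner_in_P assms(2) unfolding P_def by blast
  moreover have "finite P"
    by (rule finite_subset[of _ "Pow V"]) (auto simp: P_def odd_pair_def assms(1))
  ultimately have "card W + 1 \<le> card P"
    using assms(1) card_mono[of P "insert {x,y} (partner ` W)"]
    by (simp add: card_image W_def)
  moreover have "card {u,v,x,y} = 4"
    using uvxy by auto
  then have "card W = card V - 4"
    using uvxy assms(1) unfolding W_def by (simp add: card_Diff_subset)
  ultimately show ?thesis unfolding P_def by linarith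
qed

lemma card_odd_pairs_with_first:
  "card {(X, Y). X = S \<and> odd_pair V E X Y} = card {Y. odd_pair V E S Y}"
proof -
  have "{(X, Y). X = S \<and> odd_pair V E X Y} = Pair S ` {Y. odd_pair V E S Y}"
    by auto
  then show ?thesis
    by (simp add: card_image inj_on_def)
qed

theorem lemma3:
  fixes V :: "'a set" and E :: "'a set set" and u v :: 'a
  assumes "simple_graph V E"
    and "{u, v} \<in> Lambda_edges V E"
  shows "card {(X, Y). X = {u, v} \<and> odd_pair V E X Y} \<ge> card V - 3"
proof -
  have "odd_set V E {u,v}"
    using assms(2) unfolding Lambda_edges_def by auto
  then obtain Y where "odd_pair V E {u,v} Y"
    unfolding odd_set_def by blast
  moreover from this obtain x y where "Y = {x,y}"
    unfolding odd_pair_def by (meson card_2_iff)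
  moreover have "finite V"
    using assms(1) by (simp add: simple_graph_def)
  ultimately show ?thesis
    using card_odd_partners_ge card_odd_pairs_with_first by metis
qed

end
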